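(* Let $L\ge2$, $d,d_y\in\mathbb{N}_+$ with $m:=d-2d_y>0$. Let $W_l(t)\in\mathbb{R}^{d\times d}$ for $l\in[L-1]$ and $W_L(t)\in\mathbb{R}^{d_y\times d}$ be gradient descent iterates for the loss $\ell=\frac12\|W_{L:1}X-Y\|_F^2$, where $X\in\mathbb{R}^{d\times N}$ satisfies $XX^\top=I_d$ and $Y\in\mathbb{R}^{d_y\times N}$, with update $$W_l(t)=(1-\eta\lambda)W_l(t-1)-\eta\,W_{L:l+1}^\top(t-1)\,\Gamma(t-1)\,W_{l-1:1}^\top(t-1),\quad \Gamma(t)=(W_{L:1}(t)X-Y)X^\top,$$ learning rate $\eta>0$, weight decay $\lambda\ge0$, and initialization $W_l^\top(0)W_l(0)=\varepsilon^2I_d$ for $l\in[L-1]$ and $W_L(0)W_L^\top(0)=\varepsilon^2I_{d_y}$, $\varepsilon>0$. Then there exist orthonormal sets $\{u_i^{(l)}\}_{i=1}^m\subset\mathbb{R}^d$ for $l\in[L-1]$ and $\{v_i^{(l)}\}_{i=1}^m\subset\mathbb{R}^d$ for $l\in[L]$, with $v_i^{(l+1)}=u_i^{(l)}$ for all $l\in[L-1]$, $i\in[m]$, such that for all $t\ge0$ and $i\in[m]$: (A) $W_l(t)v_i^{(l)}=\rho(t)u_i^{(l)}$ for all $l\in[L-1]$; (B) $W_l^\top(t)u_i^{(l)}=\rho(t)v_i^{(l)}$ for all $l\in[L-1]$; (C) $W_{L:l+1}(t)u_i^{(l)}=0$ for all $l\in[L-1]$; (D) $\Gamma(t)W_{l-1:1}^\top(t)v_i^{(l)}=0$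 for all $l\in[L]$, where $\rho(0)=\varepsilon$ and $\rho(t)=\rho(t-1)(1-\eta\lambda)$ for $t\ge1$.
   Context: $[L]=\{1,\dots,L\}$. $W_{j:i}=W_j\cdots W_i$ and $W_{j:i}^\top=W_i^\top\cdots W_j^\top$ for $j\ge i$; both are the identity if $j<i$. *)

theory Defs
  imports "HOL-Analysis.Analysis"
begin

primrec sqprod_aux :: "(nat \<Rightarrow> real^'d^'d) \<Rightarrow> nat \<Rightarrow> nat \<Rightarrow> real^'d^'d" where
  "sqprod_aux W i 0 = mat 1"
| "sqprod_aux W i (Suc n) = W (i + n) ** sqprod_aux W i n"

text \<open>W_{j:i} = W_j ** ... ** W_i for j \<ge> i, identity if j < i.\<close>
definition sqprod :: "(nat \<Rightarrow> real^'d^'d) \<Rightarrow> nat \<Rightarrow> nat \<Rightarrow> real^'d^'d" where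
  "sqprod W j i = sqprod_aux W i (Suc j - i)"

text \<open>W_{L:l+1} = W_L ** W_{L-1} ** ... ** W_{l+1}, a d_y x d matrix (for l = L it is the identity,
  but that case is never used with this function; l ranges over 0..L-1).\<close>
definition topprod :: "real^'d^'dy \<Rightarrow> (nat \<Rightarrow> real^'d^'d) \<Rightarrow> nat \<Rightarrow> nat \<Rightarrow> real^'d^'dy" where
  "topprod WL W L l = WL ** sqprod W (L - 1) (l + 1)"

definition Gamma :: "real^'d^'dy \<Rightarrow> (nat \<Rightarrow> real^'d^'d) \<Rightarrow> nat \<Rightarrow> real^'N^'d \<Rightarrow> real^'N^'dy \<Rightarrow> real^'d^'dy" where
  "Gamma WL W L X Y = (topprod WL W L 0 ** X - Y) ** transpose X"

primrec rho :: "real \<Rightarrow> real \<Rightarrow> real \<Rightarrow> nat \<Rightarrow> real" where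
  "rho eps eta lam 0 = eps"
| "rho eps eta lam (Suc t) = rho eps eta lam t * (1 - eta * lam)"

definition orthonormal_fam :: "(nat \<Rightarrow> real^'d) \<Rightarrow> nat \<Rightarrow> bool" where
  "orthonormal_fam u m \<longleftrightarrow> (\<forall>i\<in>{1..m}. \<forall>j\<in>{1..m}. u i \<bullet> u j = (if i = j then 1 else 0))"

end

(* The common kernel of Y X^T and W_L(0) W_{L-1:1}(0) has dimension at least d - 2 d_y; take an
   orthonormal family b_1, ..., b_m in it and push it through the layers at time 0,
   v_l = eps^(1-l) W_{l-1:1}(0) b. Because the W_l(0) are eps times isometries, the v_l form a chain of
   singular vectors of the W_l(0) with singular value eps, annihilated by W_L(0), and stay orthonormal.
   On such a chain W_{L:l+1} v_{l+1} = 0, and Gamma W_{l-1:1}^T v_l is a multiple of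
   Gamma v_1 = W_{L:1} v_1 - Y X^T v_1 = 0, so the gradient term of every update vanishes on it: the
   chain survives each step and only the weight decay rescales its singular value by 1 - eta lam. *)
theory Submission
  imports Defs
begin

lemma dim_kernel_add_ge:
  fixes f :: "'m::euclidean_space \<Rightarrow> 'n::euclidean_space"
  assumes "linear f"
  shows "DIM('m) \<le> dim {x. f x = 0} + DIM('n)"
proof -
  let ?R = "range (adjoint f)"
  have lin: "linear (adjoint f)"
    using assms by (rule adjoint_linear)
  have "subspace ?R"
    using lin by (metis subspace_UNIV linear_subspace_image)
  then have "dim (?R\<^sup>\<bottom>) + dim ?R = DIM('m)"
    using dim_subspace_orthogonal_to_vectors[of ?R UNIV]
    by (simp add: orthogonal_comp_def)
  moreover have "dim ?R \<le> DIM('n)"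
    using dim_image_le[OF lin, of UNIV] by simp
  moreover have "{x. f x = 0} = ?R\<^sup>\<bottom>"
    using ker_orthogonal_comp_adjoint[OF assms] by auto
  ultimately show ?thesis by simp
qed

lemma dim_common_null_space_ge:
  fixes A :: "real^'n^'m" and B :: "real^'n^'k"
  shows "CARD('n) \<le> dim {x. A *v x = 0 \<and> B *v x = 0} + CARD('m) + CARD('k)"
proof -
  let ?f = "\<lambda>x. (A *v x, B *v x)"
  have "linear ?f"
    by (auto simp: linear_iff matrix_vector_right_distrib matrix_vector_mult_scaleR)
  from dim_kernel_add_ge[OF this] show ?thesis
    by (simp add: zero_prod_def add.assoc)
qed

lemma subspace_common_null_space:
  fixes A :: "real^'n^'m" and B :: "real^'n^'k"
  shows "subspace {x. A *v x = 0 \<and> B *v x = 0}"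
  by (auto simp: subspace_def matrix_vector_right_distrib matrix_vector_mult_scaleR)

lemma orthonormal_fam_in_subspace:
  fixes S :: "(real^'n) set"
  assumes "subspace S" and "m \<le> dim S"
  obtains b where "orthonormal_fam b m" and "\<And>i. i \<in> {1..m} \<Longrightarrow> b i \<in> S"
proof -
  obtain B where BS: "B \<subseteq> S" and B_orth: "pairwise orthogonal B"
    and B_norm: "\<And>x. x \<in> B \<Longrightarrow> norm x = 1" and "independent B" and "card B = dim S"
    using orthonormal_basis_subspace[OF assms(1)] by metis
  then obtain C where "C \<subseteq> B" and "card C = m" and "finite C"
    using obtain_subset_with_card_n[of m B] assms(2) by metis
  then obtain b where b: "bij_betw b {1..m} C"
    using ex_bij_betw_nat_finite_1 by metis
  then have bB: "b i \<in> B" if "i \<in> {1..m}" for i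
    using \<open>C \<subseteq> B\<close> that by (auto simp: bij_betw_def)
  have "orthonormal_fam b m"
    unfolding orthonormal_fam_def
  proof (intro ballI)
    fix i j assume i: "i \<in> {1..m}" and j: "j \<in> {1..m}"
    show "b i \<bullet> b j = (if i = j then 1 else 0)"
    proof (cases "i = j")
      case True
      then show ?thesis using B_norm[OF bB[OF i]] by (metis norm_eq_1)
    next
      case False
      then have "b i \<noteq> b j" using b i j by (metis bij_betw_def inj_on_def)
      then have "orthogonal (b i) (b j)" using B_orth bB i j by (meson pairwiseD)
      then show ?thesis using False by (simp add: orthogonal_def)
    qed
  qed
  moreover have "b i \<in> S" if "i \<in> {1..m}" for i
    using bB[OF that] BS by blast
  ultimately show ?thesis by (rule that)
qed

lemma transpose_diff:
  fixes A B :: "'a::ab_group_add^'n^'m"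
  shows "transpose (A - B) = transpose A - transpose B"
  by (simp add: transpose_def vec_eq_iff)

lemma sqprod_aux_mult_chain:
  assumes "\<And>l. k \<le> l \<Longrightarrow> l < k + n \<Longrightarrow> W l *v v l = r *\<^sub>R v (Suc l)"
  shows "sqprod_aux W k n *v v k = r ^ n *\<^sub>R v (k + n)"
  using assms
proof (induction n)
  case 0
  then show ?case by simp
next
  case (Suc n)
  then have "W (k + n) *v v (k + n) = r *\<^sub>R v (Suc (k + n))" by simp
  with Suc show ?case
    by (simp add: matrix_vector_mul_assoc[symmetric] matrix_vector_mult_scaleR)
qed

lemma transpose_sqprod_aux_mult_chain:
  assumes "\<And>l. k \<le> l \<Longrightarrow> l < k + n \<Longrightarrow> transpose (W l) *v v (Suc l) = r *\<^sub>R v l"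
  shows "transpose (sqprod_aux W k n) *v v (k + n) = r ^ n *\<^sub>R v k"
  using assms
proof (induction n)
  case 0
  then show ?case by simp
next
  case (Suc n)
  then have "transpose (W (k + n)) *v v (Suc (k + n)) = r *\<^sub>R v (k + n)" by simp
  with Suc show ?case
    by (simp add: matrix_transpose_mul matrix_vector_mul_assoc[symmetric] matrix_vector_mult_scaleR)
qed

definition singular_chain ::
    "(nat \<Rightarrow> real^'d^'d) \<Rightarrow> real^'d^'dy \<Rightarrow> nat \<Rightarrow> real \<Rightarrow> (nat \<Rightarrow> real^'d) \<Rightarrow> bool" where
  "singular_chain W WL L r v \<longleftrightarrow>
     (\<forall>l\<in>{1..L-1}. W l *v v l = r *\<^sub>R v (Suc l) \<and> transpose (W l) *v v (Suc l) = r *\<^sub>R v l)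
     \<and> WL *v v L = 0"

lemma topprod_singular_chain:
  assumes "singular_chain W WL L r v" and "l < L"
  shows "topprod WL W L l *v v (Suc l) = 0"
proof -
  have "sqprod W (L - 1) (l + 1) = sqprod_aux W (Suc l) (L - Suc l)"
    using assms(2) by (simp add: sqprod_def)
  moreover have "sqprod_aux W (Suc l) (L - Suc l) *v v (Suc l) = r ^ (L - Suc l) *\<^sub>R v L"
    using sqprod_aux_mult_chain[of "Suc l" "L - Suc l" W v r] assms
    by (simp add: singular_chain_def)
  ultimately show ?thesis
    using assms(1)
    by (simp add: topprod_def singular_chain_def matrix_vector_mul_assoc[symmetric]
        matrix_vector_mult_scaleR)
qed

lemma transpose_sqprod_singular_chain:
  assumes "singular_chain W WL L r v" and "l \<in> {1..L}"
  shows "transpose (sqprod W (l - 1) 1) *v v l = r ^ (l - 1) *\<^sub>R v 1"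
proof -
  have "transpose (sqprod_aux W 1 (l - 1)) *v v (1 + (l - 1)) = r ^ (l - 1) *\<^sub>R v 1"
    by (rule transpose_sqprod_aux_mult_chain) (use assms in \<open>auto simp: singular_chain_def\<close>)
  then show ?thesis
    using assms(2) by (simp add: sqprod_def)
qed

lemma Gamma_singular_chain:
  assumes X: "X ** transpose X = mat 1" and Y: "(Y ** transpose X) *v v 1 = 0"
    and chain: "singular_chain W WL L r v" and "0 < L"
  shows "Gamma WL W L X Y *v v 1 = 0"
proof -
  have "Gamma WL W L X Y *v v 1
      = topprod WL W L 0 *v ((X ** transpose X) *v v 1) - (Y ** transpose X) *v v 1"
    by (simp add: Gamma_def matrix_vector_mult_diff_rdistrib flip: matrix_vector_mul_assoc)
  also have "\<dots> = 0"
    using topprod_singular_chain[OF chain \<open>0 < L\<close>] X Y by simp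
  finally show ?thesis .
qed

lemma Gamma_backprop_singular_chain:
  assumes "X ** transpose X = mat 1" and "(Y ** transpose X) *v v 1 = 0"
    and chain: "singular_chain W WL L r v" and l: "l \<in> {1..L}"
  shows "Gamma WL W L X Y *v (transpose (sqprod W (l - 1) 1) *v v l) = 0"
  using Gamma_singular_chain[OF assms(1-3)] l transpose_sqprod_singular_chain[OF chain l]
  by (simp add: matrix_vector_mult_scaleR)

text \<open>The gradient term of the update of \<open>W l\<close> vanishes on \<open>v l\<close> and its transpose on \<open>v (l + 1)\<close>,
  by the two lemmas above; so on the chain only the weight decay acts.\<close>

lemma singular_chain_gd_step:
  assumes X: "X ** transpose X = mat 1" and Y: "(Y ** transpose X) *v v 1 = 0"
    and chain: "singular_chain W WL L r v" and "0 < L"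
    and upd_W: "\<And>l. l \<in> {1..L-1} \<Longrightarrow>
        W' l = c *\<^sub>R W l - eta *\<^sub>R (transpose (topprod WL W L l) ** Gamma WL W L X Y
                                  ** transpose (sqprod W (l - 1) 1))"
    and upd_WL: "WL' = c *\<^sub>R WL - eta *\<^sub>R (Gamma WL W L X Y ** transpose (sqprod W (L - 1) 1))"
  shows "singular_chain W' WL' L (r * c) v"
  unfolding singular_chain_def
proof (intro conjI ballI)
  let ?G = "Gamma WL W L X Y"
  fix l assume l: "l \<in> {1..L-1}"
  have "W' l *v v l = c *\<^sub>R (W l *v v l)
      - eta *\<^sub>R (transpose (topprod WL W L l) *v (?G *v (transpose (sqprod W (l - 1) 1) *v v l)))"
    by (simp only: upd_W[OF l] matrix_vector_mult_diff_rdistrib scaleR_matrix_vector_assoc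
        matrix_vector_mul_assoc matrix_mul_assoc)
  also have "?G *v (transpose (sqprod W (l - 1) 1) *v v l) = 0"
    using Gamma_backprop_singular_chain[OF X Y chain] l by auto
  finally show "W' l *v v l = (r * c) *\<^sub>R v (Suc l)"
    using chain l by (simp add: singular_chain_def)
  have "transpose (W' l) *v v (Suc l) = c *\<^sub>R (transpose (W l) *v v (Suc l))
      - eta *\<^sub>R (sqprod W (l - 1) 1 *v (transpose ?G *v (topprod WL W L l *v v (Suc l))))"
    by (simp only: upd_W[OF l] transpose_diff transpose_scalar matrix_transpose_mul transpose_transpose
        matrix_vector_mult_diff_rdistrib scaleR_matrix_vector_assoc matrix_vector_mul_assoc matrix_mul_assoc)
  also have "topprod WL W L l *v v (Suc l) = 0"
    using topprod_singular_chain[OF chain] l by auto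
  finally show "transpose (W' l) *v v (Suc l) = (r * c) *\<^sub>R v l"
    using chain l by (simp add: singular_chain_def)
next
  have "WL' *v v L = c *\<^sub>R (WL *v v L)
      - eta *\<^sub>R (Gamma WL W L X Y *v (transpose (sqprod W (L - 1) 1) *v v L))"
    by (simp only: upd_WL matrix_vector_mult_diff_rdistrib scaleR_matrix_vector_assoc
        matrix_vector_mul_assoc)
  also have "Gamma WL W L X Y *v (transpose (sqprod W (L - 1) 1) *v v L) = 0"
    using Gamma_backprop_singular_chain[OF X Y chain] \<open>0 < L\<close> by auto
  finally show "WL' *v v L = 0"
    using chain by (simp add: singular_chain_def)
qed

lemma singular_chain_gd:
  assumes X: "X ** transpose X = mat 1" and Y: "(Y ** transpose X) *v v 1 = 0" and "0 < L"
    and init: "singular_chain (W 0) (WL 0) L eps v"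
    and upd_W: "\<And>t l. l \<in> {1..L-1} \<Longrightarrow>
        W (Suc t) l = (1 - eta * lam) *\<^sub>R W t l
          - eta *\<^sub>R (transpose (topprod (WL t) (W t) L l) ** Gamma (WL t) (W t) L X Y
                       ** transpose (sqprod (W t) (l - 1) 1))"
    and upd_WL: "\<And>t. WL (Suc t) = (1 - eta * lam) *\<^sub>R WL t
          - eta *\<^sub>R (Gamma (WL t) (W t) L X Y ** transpose (sqprod (W t) (L - 1) 1))"
  shows "singular_chain (W t) (WL t) L (rho eps eta lam t) v"
proof (induction t)
  case 0
  then show ?case using init by simp
next
  case (Suc t)
  then show ?case
    using singular_chain_gd_step[OF X Y Suc \<open>0 < L\<close> upd_W upd_WL] by simp
qed

definition forward_chain :: "(nat \<Rightarrow> real^'d^'d) \<Rightarrow> real \<Rightarrow> real^'d \<Rightarrow> nat \<Rightarrow> real^'d" where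
  "forward_chain W eps b l = inverse eps ^ (l - 1) *\<^sub>R (sqprod_aux W 1 (l - 1) *v b)"

lemma forward_chain_Suc:
  assumes "eps \<noteq> 0" and "0 < l"
  shows "W l *v forward_chain W eps b l = eps *\<^sub>R forward_chain W eps b (Suc l)"
proof -
  obtain k where l: "l = Suc k"
    using assms(2) gr0_conv_Suc by blast
  have "eps * inverse eps ^ l = inverse eps ^ k"
    using assms(1) by (simp add: l)
  then show ?thesis
    by (simp add: forward_chain_def l matrix_vector_mult_scaleR matrix_vector_mul_assoc)
qed

lemma scaled_isometry_mult:
  fixes A :: "real^'n^'m"
  assumes "transpose A ** A = c *\<^sub>R mat 1"
  shows "transpose A *v (A *v x) = c *\<^sub>R x"
    and "(A *v x) \<bullet> (A *v y) = c * (x \<bullet> y)"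
proof -
  show Ax: "transpose A *v (A *v x) = c *\<^sub>R x" for x
    by (simp add: matrix_vector_mul_assoc assms scaleR_matrix_vector_assoc[symmetric])
  have "(A *v x) \<bullet> (A *v y) = x \<bullet> (transpose A *v (A *v y))"
    by (metis dot_lmul_matrix vector_transpose_matrix)
  also have "\<dots> = c * (x \<bullet> y)"
    unfolding Ax by simp
  finally show "(A *v x) \<bullet> (A *v y) = c * (x \<bullet> y)" .
qed

lemma forward_chain_inner:
  assumes "eps \<noteq> 0" and "0 < k"
    and iso: "\<And>l. l \<in> {1..<k} \<Longrightarrow> transpose (W l) ** W l = eps\<^sup>2 *\<^sub>R mat 1"
  shows "forward_chain W eps b k \<bullet> forward_chain W eps c k = b \<bullet> c"
  using assms(2,3)
proof (induction k)
  case 0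
  then show ?case by simp
next
  case (Suc k)
  show ?case
  proof (cases "k = 0")
    case False
    have "forward_chain W eps x (Suc k) = inverse eps *\<^sub>R (W k *v forward_chain W eps x k)" for x
      using forward_chain_Suc[OF assms(1), of k W x] False assms(1) by simp
    moreover have iso_k: "transpose (W k) ** W k = eps\<^sup>2 *\<^sub>R mat 1"
      using False by (intro Suc.prems) auto
    have "(W k *v forward_chain W eps b k) \<bullet> (W k *v forward_chain W eps c k) = eps\<^sup>2 * (b \<bullet> c)"
      using Suc False by (simp add: scaled_isometry_mult(2)[OF iso_k])
    ultimately show ?thesis
      using assms(1) by (simp add: power2_eq_square field_simps)
  qed (simp add: forward_chain_def)
qed

lemma orthonormal_fam_forward_chain:
  assumes "eps \<noteq> 0" and "0 < k"
    and "\<And>l. l \<in> {1..<k} \<Longrightarrow> transpose (W l) ** W l = eps\<^sup>2 *\<^sub>R mat 1"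
    and "orthonormal_fam b m"
  shows "orthonormal_fam (\<lambda>i. forward_chain W eps (b i) k) m"
  using assms forward_chain_inner[OF assms(1-3)] by (simp add: orthonormal_fam_def)

lemma singular_chain_forward_chain:
  assumes "eps \<noteq> 0" and "0 < L"
    and iso: "\<And>l. l \<in> {1..L-1} \<Longrightarrow> transpose (W l) ** W l = eps\<^sup>2 *\<^sub>R mat 1"
    and WL: "(WL ** sqprod W (L - 1) 1) *v b = 0"
  shows "singular_chain W WL L eps (forward_chain W eps b)"
  unfolding singular_chain_def
proof (intro conjI ballI)
  fix l assume l: "l \<in> {1..L-1}"
  show fwd: "W l *v forward_chain W eps b l = eps *\<^sub>R forward_chain W eps b (Suc l)"
    by (rule forward_chain_Suc[OF assms(1)]) (use l in auto)
  have "eps *\<^sub>R (transpose (W l) *v forward_chain W eps b (Suc l))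
      = eps\<^sup>2 *\<^sub>R forward_chain W eps b l"
    by (simp only: matrix_vector_mult_scaleR[symmetric] fwd[symmetric] scaled_isometry_mult(1)[OF iso[OF l]])
  then show "transpose (W l) *v forward_chain W eps b (Suc l) = eps *\<^sub>R forward_chain W eps b l"
    using assms(1) by (metis power2_eq_square scaleR_cancel_left scaleR_scaleR)
next
  show "WL *v forward_chain W eps b L = 0"
    using WL by (simp add: forward_chain_def sqprod_def matrix_vector_mult_scaleR matrix_vector_mul_assoc)
qed

theorem lemma2:
  fixes L m :: nat
    and eta lam eps :: real
    and X :: "real^'N^'d" and Y :: "real^'N^'dy"
    and W :: "nat \<Rightarrow> nat \<Rightarrow> real^'d^'d"
    and WL :: "nat \<Rightarrow> real^'d^'dy"
  assumes L: "L \<ge> 2"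
    and m_def: "m = CARD('d) - 2 * CARD('dy)"
    and m_pos: "2 * CARD('dy) < CARD('d)"
    and X: "X ** transpose X = mat 1"
    and eta_pos: "eta > 0" and lam_nn: "lam \<ge> 0" and eps_pos: "eps > 0"
    and init_W: "\<And>l. l \<in> {1..L-1} \<Longrightarrow> transpose (W 0 l) ** W 0 l = eps\<^sup>2 *\<^sub>R mat 1"
    and init_WL: "WL 0 ** transpose (WL 0) = eps\<^sup>2 *\<^sub>R mat 1"
    and upd_W: "\<And>t l. l \<in> {1..L-1} \<Longrightarrow>
        W (Suc t) l = (1 - eta * lam) *\<^sub>R W t l
          - eta *\<^sub>R (transpose (topprod (WL t) (W t) L l) ** Gamma (WL t) (W t) L X Y
                       ** transpose (sqprod (W t) (l - 1) 1))"
    and upd_WL: "\<And>t. WL (Suc t) = (1 - eta * lam) *\<^sub>R WL t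
          - eta *\<^sub>R (Gamma (WL t) (W t) L X Y ** transpose (sqprod (W t) (L - 1) 1))"
  shows "\<exists>(u :: nat \<Rightarrow> nat \<Rightarrow> real^'d) (v :: nat \<Rightarrow> nat \<Rightarrow> real^'d).
     (\<forall>l\<in>{1..L-1}. orthonormal_fam (u l) m) \<and>
     (\<forall>l\<in>{1..L}. orthonormal_fam (v l) m) \<and>
     (\<forall>l\<in>{1..L-1}. \<forall>i\<in>{1..m}. v (l + 1) i = u l i) \<and>
     (\<forall>t. \<forall>i\<in>{1..m}.
        (\<forall>l\<in>{1..L-1}. W t l *v v l i = rho eps eta lam t *\<^sub>R u l i) \<and>
        (\<forall>l\<in>{1..L-1}. transpose (W t l) *v u l i = rho eps eta lam t *\<^sub>R v l i) \<and>
        (\<forall>l\<in>{1..L-1}. topprod (WL t) (W t) L l *v u l i = 0) \<and>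
        (\<forall>l\<in>{1..L}. Gamma (WL t) (W t) L X Y *v (transpose (sqprod (W t) (l - 1) 1) *v v l i) = 0))"
proof -
  let ?r = "rho eps eta lam"
  let ?K = "{x. (Y ** transpose X) *v x = 0 \<and> (WL 0 ** sqprod (W 0) (L - 1) 1) *v x = 0}"
  have "m \<le> dim ?K"
    using dim_common_null_space_ge[of "Y ** transpose X" "WL 0 ** sqprod (W 0) (L - 1) 1"] m_def
    by simp
  then obtain b where b_orth: "orthonormal_fam b m" and b_K: "\<And>i. i \<in> {1..m} \<Longrightarrow> b i \<in> ?K"
    using orthonormal_fam_in_subspace[OF subspace_common_null_space] by blast
  define v where "v = (\<lambda>l i. forward_chain (W 0) eps (b i) l)"
  have "eps \<noteq> 0" "0 < L"
    using eps_pos L by auto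
  have Y: "(Y ** transpose X) *v v 1 i = 0" if "i \<in> {1..m}" for i
    using b_K[OF that] by (simp add: v_def forward_chain_def)
  have chain: "singular_chain (W t) (WL t) L (?r t) (\<lambda>l. v l i)" if i: "i \<in> {1..m}" for t i
  proof -
    have "singular_chain (W 0) (WL 0) L eps (\<lambda>l. v l i)"
      using b_K[OF i] unfolding v_def
      by (intro singular_chain_forward_chain \<open>eps \<noteq> 0\<close> \<open>0 < L\<close> init_W) auto
    from singular_chain_gd[OF X Y[OF i] \<open>0 < L\<close> this upd_W upd_WL] show ?thesis .
  qed
  have orth: "orthonormal_fam (v l) m" if "l \<in> {1..L}" for l
    unfolding v_def using that
    by (intro orthonormal_fam_forward_chain \<open>eps \<noteq> 0\<close> init_W b_orth) auto
  have AB: "W t l *v v l i = ?r t *\<^sub>R v (Suc l) i \<and> transpose (W t l) *v v (Suc l) i = ?r t *\<^sub>R v l i"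
    if "i \<in> {1..m}" "l \<in> {1..L-1}" for t i l
    using chain[OF that(1)] that(2) by (simp add: singular_chain_def)
  have C: "topprod (WL t) (W t) L l *v v (Suc l) i = 0" if "i \<in> {1..m}" "l \<in> {1..L-1}" for t i l
    using topprod_singular_chain[OF chain[OF that(1)]] that(2) by auto
  have D: "Gamma (WL t) (W t) L X Y *v (transpose (sqprod (W t) (l - 1) 1) *v v l i) = 0"
    if "i \<in> {1..m}" "l \<in> {1..L}" for t i l
    using Gamma_backprop_singular_chain[OF X Y[OF that(1)] chain[OF that(1)] that(2)] .
  show ?thesis
    by (rule exI[where x = "\<lambda>l. v (Suc l)"], rule exI[where x = v]) (use orth AB C D in auto)
qed

end
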